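(* There is an absolute constant $c>0$ such that the following holds. Let $\beta^*\in\mathbb R$, $\mathbf X\in\mathbb R^n$ with i.i.d. $N(0,1)$ entries, and $\eta\in\mathbb R^n$ deterministic with $|\{i:|\eta_i|\le1\}|\ge\alpha n$ for some $\alpha\in(0,1]$; let $\mathbf y=\mathbf X\beta^*+\eta$. Let $\hat\beta$ be the output of the Univariate Median Algorithm on $(\mathbf y,\mathbf X)$. Then for any $0<\tau\le\alpha^2n$, \[|\beta^*-\hat\beta|^2\le\frac{\tau}{\alpha^2n}\] with probability at least $1-2\exp(-c\tau)$.
   Context: Univariate Median Algorithm on input $(y,X)\in\mathbb R^n\times\mathbb R^n$: sample independent $w_i\sim N(0,1)$ and Rademacher signs $\sigma_i$ ($i\in[n]$), independent of everything else, and set $y'_i=\sigma_iy_i+w_i$, $X'_i=\sigma_iX_i$. Let $M=\{i:|X'_i|\ge1/2\}$ and output the median of $\{y'_i/X'_i:i\in M\}$ (the $\lceil|M|/2\rceil$-th smallest value). *)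

theory Defs
  imports "HOL-Probability.Probability"
begin

definition std_gauss :: "real measure" where
  "std_gauss = density lborel std_normal_density"

definition rademacher :: "real measure" where
  "rademacher = measure_pmf (pmf_of_set {-1, 1})"

text \<open>Per-coordinate randomness: (X_i, w_i, sigma_i), all independent.\<close>
definition coord_measure :: "(real \<times> real \<times> real) measure" where
  "coord_measure = std_gauss \<Otimes>\<^sub>M (std_gauss \<Otimes>\<^sub>M rademacher)"

definition sample_space :: "nat \<Rightarrow> (nat \<Rightarrow> real \<times> real \<times> real) measure" where
  "sample_space n = (\<Pi>\<^sub>M i\<in>{..<n}. coord_measure)"

text \<open>The k-th smallest (1-indexed) element of the multiset of values f i, i in M.\<close>
definition kth_smallest :: "nat \<Rightarrow> (nat \<Rightarrow> real) \<Rightarrow> nat set \<Rightarrow> real" where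
  "kth_smallest k f M = sort (map f (sorted_list_of_set M)) ! (k - 1)"

text \<open>Univariate Median Algorithm, given the data y, X and the internal randomness
  w (Gaussian noise) and sigma (signs). Convention: outputs 0 if the set M is empty.\<close>
definition median_alg ::
  "nat \<Rightarrow> (nat \<Rightarrow> real) \<Rightarrow> (nat \<Rightarrow> real) \<Rightarrow> (nat \<Rightarrow> real) \<Rightarrow> (nat \<Rightarrow> real) \<Rightarrow> real" where
  "median_alg n y X w \<sigma> =
    (let y' = (\<lambda>i. \<sigma> i * y i + w i);
         X' = (\<lambda>i. \<sigma> i * X i);
         M = {i. i < n \<and> \<bar>X' i\<bar> \<ge> 1/2}
     in if M = {} then 0
        else kth_smallest (nat \<lceil>real (card M) / 2\<rceil>) (\<lambda>i. y' i / X' i) M)"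

end

theory Submission
  imports Defs
begin

text \<open>
  The estimate is the median of the ratios \<open>y'\<^sub>i / X'\<^sub>i\<close> over the selected indices, so it
  lies in \<open>[\<beta> - t, \<beta> + t]\<close> as soon as at least half of the selected ratios are \<open>\<le> \<beta> + t\<close>
  and more than half are \<open>\<ge> \<beta> - t\<close>. Each coordinate therefore casts an independent vote
  \<open>\<plusminus>1\<close> (or 0 if it is not selected) for each of these two events. Negating the coordinate
  \<open>(X\<^sub>i, w\<^sub>i, \<sigma>\<^sub>i)\<close> preserves its law and reflects its ratio about \<open>\<beta>\<close>, so every vote has
  nonnegative mean; when \<open>|\<eta>\<^sub>i| \<le> 1\<close> the ratio falls within \<open>t\<close> of \<open>\<beta>\<close> with probability
  of order \<open>t\<close>, so the mean is of order \<open>t\<close>. Hoeffding's inequality bounds each failure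
  probability by \<open>exp (- c \<alpha>\<^sup>2 n t\<^sup>2)\<close>, and \<open>t\<^sup>2 = \<tau> / (\<alpha>\<^sup>2 n)\<close> gives the claim.
\<close>

lemma sets_std_gauss [simp, measurable_cong]: "sets std_gauss = sets borel"
  by (simp add: std_gauss_def)

lemma space_std_gauss [simp]: "space std_gauss = UNIV"
  by (simp add: std_gauss_def)

lemma sets_rademacher [simp, measurable_cong]: "sets rademacher = sets (count_space UNIV)"
  by (simp add: rademacher_def)

lemma space_rademacher [simp]: "space rademacher = UNIV"
  by (simp add: rademacher_def)

lemma sets_coord_measure [measurable_cong]:
  "sets coord_measure = sets (borel \<Otimes>\<^sub>M (borel \<Otimes>\<^sub>M count_space UNIV))"
  unfolding coord_measure_def by (intro sets_pair_measure_cong) simp_all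

lemma prob_space_std_gauss: "prob_space std_gauss"
  unfolding std_gauss_def by (rule prob_space_normal_density) simp

lemma prob_space_rademacher: "prob_space rademacher"
  unfolding rademacher_def by (rule measure_pmf.prob_space_axioms)

lemma prob_space_coord_measure: "prob_space coord_measure"
  unfolding coord_measure_def
  by (intro prob_space_pair prob_space_std_gauss prob_space_rademacher)

lemma prob_space_sample_space: "prob_space (sample_space n)"
  unfolding sample_space_def by (intro prob_space_PiM prob_space_coord_measure)

interpretation gauss: prob_space std_gauss
  by (rule prob_space_std_gauss)

interpretation coord: prob_space coord_measure
  by (rule prob_space_coord_measure)

lemma measurable_sign [measurable]:
  "(\<lambda>p::real \<times> real \<times> real. snd (snd p))
     \<in> borel_measurable (borel \<Otimes>\<^sub>M (borel \<Otimes>\<^sub>M count_space UNIV))"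
  by (rule measurable_compose[OF measurable_snd measurable_compose[OF measurable_snd]]) auto

lemma measure_pair_measure_Times:
  assumes "prob_space N" "prob_space M" "A \<in> sets N" "B \<in> sets M"
  shows "measure (N \<Otimes>\<^sub>M M) (A \<times> B) = measure N A * measure M B"
proof -
  interpret M: prob_space M by fact
  have "emeasure (N \<Otimes>\<^sub>M M) (A \<times> B) = emeasure N A * emeasure M B"
    by (rule M.emeasure_pair_measure_Times) (use assms in auto)
  then show ?thesis
    by (simp add: measure_def enn2real_mult)
qed

subsection \<open>Symmetry of a coordinate under negation\<close>

lemma distr_std_gauss_uminus: "distr std_gauss std_gauss uminus = std_gauss"
proof -
  have "std_gauss = density (distr lborel borel uminus) std_normal_density"
    by (simp add: std_gauss_def lborel_distr_uminus)
  also have "\<dots> = distr (density lborel (\<lambda>x. std_normal_density (- x))) borel uminus"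
    by (rule density_distr) auto
  also have "(\<lambda>x::real. std_normal_density (- x)) = std_normal_density"
    by (simp add: fun_eq_iff normal_density_def)
  finally have "std_gauss = distr std_gauss borel uminus"
    by (simp add: std_gauss_def)
  also have "\<dots> = distr std_gauss std_gauss uminus"
    by (intro distr_cong) auto
  finally show ?thesis ..
qed

lemma distr_rademacher_uminus: "distr rademacher rademacher uminus = rademacher"
proof -
  have "map_pmf uminus (pmf_of_set {-1, 1::real}) = pmf_of_set {-1, 1}"
    by (subst map_pmf_of_set_inj) (auto simp: inj_on_def insert_commute)
  then have "distr rademacher (count_space UNIV) uminus = rademacher"
    unfolding rademacher_def by (metis map_pmf_rep_eq)
  moreover have "distr rademacher (count_space UNIV) uminus = distr rademacher rademacher uminus"
    by (intro distr_cong) auto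
  ultimately show ?thesis
    by simp
qed

definition coord_neg :: "real \<times> real \<times> real \<Rightarrow> real \<times> real \<times> real" where
  "coord_neg p = (- fst p, - fst (snd p), - snd (snd p))"

lemma measurable_coord_neg [measurable]: "coord_neg \<in> measurable coord_measure coord_measure"
proof -
  have [measurable]: "(\<lambda>p::real \<times> real \<times> real. - snd (snd p))
      \<in> measurable (borel \<Otimes>\<^sub>M (borel \<Otimes>\<^sub>M count_space UNIV)) (count_space UNIV)"
    by (rule measurable_compose[OF measurable_compose[OF measurable_snd measurable_snd]
          measurable_count_space])
  show ?thesis
    unfolding coord_neg_def by measurable
qed

lemma distr_coord_measure_neg: "distr coord_measure coord_measure coord_neg = coord_measure"
proof -
  let ?GR = "std_gauss \<Otimes>\<^sub>M rademacher" and ?neg2 = "\<lambda>(x::real, y::real). (- x, - y)"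
  have "(\<lambda>p::real \<times> real. - snd p) \<in> measurable ?GR (count_space UNIV)"
    by (rule measurable_compose[OF measurable_snd]) (simp add: rademacher_def)
  then have "(\<lambda>p::real \<times> real. - snd p) \<in> measurable ?GR rademacher"
    by (simp cong: measurable_cong_sets)
  then have neg2: "?neg2 \<in> measurable ?GR ?GR"
    by (simp add: split_beta')
  have GR_prob: "prob_space ?GR"
    by (intro prob_space_pair prob_space_std_gauss prob_space_rademacher)
  have "distr ?GR ?GR ?neg2 = distr std_gauss std_gauss uminus \<Otimes>\<^sub>M distr rademacher rademacher uminus"
    by (rule pair_measure_distr[symmetric])
      (auto simp: distr_rademacher_uminus intro: prob_space_imp_sigma_finite prob_space_rademacher)
  then have GR: "distr ?GR ?GR ?neg2 = ?GR"
    by (simp only: distr_std_gauss_uminus distr_rademacher_uminus)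
  have neg: "(\<lambda>(x, y). (- x, ?neg2 y)) = coord_neg"
    by (auto simp: coord_neg_def fun_eq_iff split: prod.splits)
  have "distr coord_measure coord_measure coord_neg
      = distr std_gauss std_gauss uminus \<Otimes>\<^sub>M distr ?GR ?GR ?neg2"
    unfolding coord_measure_def neg[symmetric]
  proof (rule pair_measure_distr[symmetric, OF _ neg2])
    show "uminus \<in> measurable std_gauss std_gauss"
      by simp
    show "sigma_finite_measure (distr ?GR ?GR ?neg2)"
      unfolding GR by (rule prob_space_imp_sigma_finite[OF GR_prob])
  qed
  also have "\<dots> = coord_measure"
    unfolding coord_measure_def by (simp only: distr_std_gauss_uminus GR)
  finally show ?thesis .
qed

lemma integral_coord_neg:
  assumes [measurable]: "f \<in> borel_measurable coord_measure"
  shows "(\<integral>p. f (coord_neg p) \<partial>coord_measure) = (integral\<^sup>L coord_measure f :: real)"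
  using integral_distr[of coord_neg coord_measure coord_measure f]
  by (simp add: distr_coord_measure_neg)

subsection \<open>Votes of a single coordinate\<close>

text \<open>
  A coordinate \<open>p = (X\<^sub>i, w\<^sub>i, \<sigma>\<^sub>i)\<close> with \<open>y\<^sub>i = X\<^sub>i \<beta> + e\<close> is selected iff \<open>|X'\<^sub>i| \<ge> 1/2\<close>,
  and \<open>ratio \<beta> e p\<close> is the ratio \<open>y'\<^sub>i / X'\<^sub>i\<close> that enters the median.
\<close>

definition selected :: "real \<times> real \<times> real \<Rightarrow> bool" where
  "selected p \<longleftrightarrow> 1/2 \<le> \<bar>snd (snd p) * fst p\<bar>"

definition ratio :: "real \<Rightarrow> real \<Rightarrow> real \<times> real \<times> real \<Rightarrow> real" where
  "ratio \<beta> e p = (snd (snd p) * (fst p * \<beta> + e) + fst (snd p)) / (snd (snd p) * fst p)"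

definition vote :: "(real \<Rightarrow> bool) \<Rightarrow> real \<Rightarrow> real \<Rightarrow> real \<times> real \<times> real \<Rightarrow> real" where
  "vote P \<beta> e p = (if selected p then if P (ratio \<beta> e p) then 1 else -1 else 0)"

lemma measurable_selected [measurable]: "Measurable.pred coord_measure selected"
  unfolding selected_def by measurable

lemma measurable_ratio [measurable]: "ratio \<beta> e \<in> borel_measurable coord_measure"
  unfolding ratio_def by measurable

lemma measurable_vote [measurable]:
  assumes [measurable]: "Measurable.pred borel P"
  shows "vote P \<beta> e \<in> borel_measurable coord_measure"
  unfolding vote_def by measurable

lemma abs_vote_le: "\<bar>vote P \<beta> e p\<bar> \<le> 1"
  by (simp add: vote_def)

lemma integrable_vote:
  assumes "Measurable.pred borel P"
  shows "integrable coord_measure (vote P \<beta> e)"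
  using assms by (intro coord.integrable_const_bound[where B = 1]) (auto simp: abs_vote_le)

lemma vote_not: "vote (\<lambda>v. \<not> P v) \<beta> e p = - vote P \<beta> e p"
  by (simp add: vote_def)

lemma selected_coord_neg [simp]: "selected (coord_neg p) \<longleftrightarrow> selected p"
  by (simp add: selected_def coord_neg_def)

lemma ratio_coord_neg:
  assumes "selected p"
  shows "ratio \<beta> e (coord_neg p) = 2 * \<beta> - ratio \<beta> e p"
proof -
  have "snd (snd p) * fst p \<noteq> 0"
    using assms by (auto simp: selected_def)
  then show ?thesis
    by (simp add: ratio_def coord_neg_def field_simps)
qed

text \<open>On this set the ratio is within \<open>t\<close> of \<open>\<beta>\<close>, and so is the ratio of the negated coordinate.\<close>

definition window :: "real \<Rightarrow> real \<Rightarrow> (real \<times> real \<times> real) set" where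
  "window e t = {x. 1/2 \<le> \<bar>x\<bar>} \<times> ({- e - t/2 .. - e + t/2} \<times> {1})"

lemma vote_add_vote_coord_neg_ge:
  assumes sym: "\<And>v. P v \<or> P (2 * \<beta> - v)" and near: "\<And>v. \<bar>v - \<beta>\<bar> \<le> t \<Longrightarrow> P v"
    and "0 \<le> t"
  shows "2 * indicator (window e t) p \<le> vote P \<beta> e p + vote P \<beta> e (coord_neg p)"
proof (cases "p \<in> window e t")
  case True
  then obtain x w where p: "p = (x, w, 1)" and x: "1/2 \<le> \<bar>x\<bar>"
    and w_lower: "- e - t/2 \<le> w" and w_upper: "w \<le> - e + t/2"
    by (auto simp: window_def)
  have w: "\<bar>e + w\<bar> \<le> t/2"
    using w_lower w_upper by linarith
  have "\<bar>(e + w) / x\<bar> = \<bar>e + w\<bar> / \<bar>x\<bar>"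
    by (simp add: abs_divide)
  also have "\<dots> \<le> (t/2) / (1/2)"
    using w x \<open>0 \<le> t\<close> by (intro frac_le) auto
  finally have "\<bar>(e + w) / x\<bar> \<le> t"
    by simp
  moreover have "ratio \<beta> e p = \<beta> + (e + w) / x"
    using x by (auto simp: p ratio_def field_simps)
  ultimately have "P (ratio \<beta> e p)" "P (2 * \<beta> - ratio \<beta> e p)"
    by (auto intro!: near)
  moreover have "selected p"
    using x by (simp add: p selected_def)
  ultimately show ?thesis
    using True by (simp add: vote_def ratio_coord_neg)
next
  case False
  then show ?thesis
    using sym[of "ratio \<beta> e p"] by (auto simp: vote_def ratio_coord_neg)
qed

lemma integral_vote_ge_window:
  assumes [measurable]: "Measurable.pred borel P"
    and "\<And>v. P v \<or> P (2 * \<beta> - v)" "\<And>v. \<bar>v - \<beta>\<bar> \<le> t \<Longrightarrow> P v" "0 \<le> t"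
  shows "measure coord_measure (window e t) \<le> integral\<^sup>L coord_measure (vote P \<beta> e)"
proof -
  have window_sets: "window e t \<in> sets coord_measure"
    unfolding coord_measure_def window_def by (intro pair_measureI) auto
  have "2 * measure coord_measure (window e t) = (\<integral>p. 2 * indicator (window e t) p \<partial>coord_measure)"
    using window_sets by simp
  also have "\<dots> \<le> (\<integral>p. vote P \<beta> e p + vote P \<beta> e (coord_neg p) \<partial>coord_measure)"
    using window_sets assms
    by (intro integral_mono vote_add_vote_coord_neg_ge integrable_vote Bochner_Integration.integrable_add
          integrable_mult_right integrable_real_indicator coord.integrable_const_bound[where B = 1])
      (auto simp: abs_vote_le coord.emeasure_eq_measure)
  also have "\<dots> = 2 * integral\<^sup>L coord_measure (vote P \<beta> e)"
    by (subst Bochner_Integration.integral_add)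
      (auto intro!: integrable_vote coord.integrable_const_bound[where B = 1]
        simp: abs_vote_le integral_coord_neg)
  finally show ?thesis
    by simp
qed

lemma std_normal_density_mono:
  assumes "\<bar>x\<bar> \<le> r"
  shows "std_normal_density r \<le> std_normal_density x"
proof -
  have "x\<^sup>2 \<le> r\<^sup>2"
    using power_mono[OF assms, of 2] by simp
  then show ?thesis
    by (simp add: std_normal_density_def divide_right_mono)
qed

lemma measure_std_gauss_Icc_ge:
  assumes "- r \<le> a" "a \<le> b" "b \<le> r"
  shows "std_normal_density r * (b - a) \<le> measure std_gauss {a..b}"
proof -
  have "ennreal (std_normal_density r * (b - a))
      = (\<integral>\<^sup>+x. ennreal (std_normal_density r) * indicator {a..b} x \<partial>lborel)"
    using assms by (simp add: nn_integral_cmult_indicator ennreal_mult)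
  also have "\<dots> \<le> (\<integral>\<^sup>+x. ennreal (std_normal_density x) * indicator {a..b} x \<partial>lborel)"
    using assms by (intro nn_integral_mono) (auto intro!: ennreal_leI std_normal_density_mono
        split: split_indicator)
  also have "\<dots> = emeasure std_gauss {a..b}"
    unfolding std_gauss_def by (subst emeasure_density) auto
  finally show ?thesis
    by (simp add: gauss.emeasure_eq_measure ennreal_le_iff)
qed

lemma measure_window_ge:
  assumes "\<bar>e\<bar> \<le> 1" "0 \<le> t" "t \<le> 2"
  shows "std_normal_density 2 ^ 2 * t / 4 \<le> measure coord_measure (window e t)"
proof -
  let ?A = "{x::real. 1/2 \<le> \<bar>x\<bar>}" and ?B = "{- e - t/2 .. - e + t/2}"
  have A_sets: "?A \<in> sets borel"
    by measurable
  have measure_rademacher_1: "measure rademacher {1} = 1/2"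
    unfolding rademacher_def by (simp add: measure_pmf_of_set)
  have A_ge: "std_normal_density 2 / 2 \<le> measure std_gauss ?A"
  proof -
    have "std_normal_density 2 * (1 - 1/2) \<le> measure std_gauss {1/2..1::real}"
      by (rule measure_std_gauss_Icc_ge) auto
    also have "\<dots> \<le> measure std_gauss ?A"
      using A_sets by (intro gauss.finite_measure_mono) auto
    finally show ?thesis
      by simp
  qed
  have B_ge: "std_normal_density 2 * t \<le> measure std_gauss ?B"
    using measure_std_gauss_Icc_ge[of 2 "- e - t/2" "- e + t/2"] assms by auto
  have "std_normal_density 2 ^ 2 * t / 4
      = (std_normal_density 2 / 2) * (std_normal_density 2 * t * (1/2))"
    by (simp add: power2_eq_square)
  also have "\<dots> \<le> measure std_gauss ?A * (measure std_gauss ?B * (1/2))"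
    using A_ge B_ge \<open>0 \<le> t\<close> by (intro mult_mono) (auto simp: normal_density_pos less_imp_le)
  also have "\<dots> = measure coord_measure (window e t)"
    unfolding coord_measure_def window_def using A_sets
    by (simp add: measure_pair_measure_Times prob_space_std_gauss prob_space_rademacher
        prob_space_pair pair_measureI measure_rademacher_1)
  finally show ?thesis .
qed

subsection \<open>Sums of independent coordinates\<close>

lemma indep_vars_components:
  assumes "n > 0"
  shows "prob_space.indep_vars (sample_space n) (\<lambda>_. coord_measure) (\<lambda>i \<omega>. \<omega> i) {..<n}"
proof -
  interpret S: prob_space "sample_space n"
    by (rule prob_space_sample_space)
  have "distr (sample_space n) (\<Pi>\<^sub>M i\<in>{..<n}. coord_measure) (\<lambda>x. \<lambda>i\<in>{..<n}. x i)
      = distr (sample_space n) (sample_space n) (\<lambda>x. x)"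
    by (intro distr_cong) (auto simp: sample_space_def space_PiM PiE_def extensional_def fun_eq_iff)
  also have "\<dots> = (\<Pi>\<^sub>M i\<in>{..<n}. distr (sample_space n) coord_measure (\<lambda>\<omega>. \<omega> i))"
    unfolding distr_id sample_space_def
    by (intro PiM_cong refl distr_PiM_component[symmetric] prob_space_coord_measure) auto
  finally show ?thesis
    using assms by (subst S.indep_vars_iff_distr_eq_PiM') (auto simp: sample_space_def)
qed

lemma integral_component:
  assumes "i < n" and [measurable]: "f \<in> borel_measurable coord_measure"
  shows "(\<integral>\<omega>. f (\<omega> i) \<partial>sample_space n) = (integral\<^sup>L coord_measure f :: real)"
proof -
  have [measurable]: "(\<lambda>\<omega>. \<omega> i) \<in> measurable (sample_space n) coord_measure"
    unfolding sample_space_def using assms(1) by (intro measurable_component_singleton) auto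
  have "distr (sample_space n) coord_measure (\<lambda>\<omega>. \<omega> i) = coord_measure"
    unfolding sample_space_def using assms(1) by (intro distr_PiM_component prob_space_coord_measure) auto
  then show ?thesis
    using integral_distr[of "\<lambda>\<omega>. \<omega> i" "sample_space n" coord_measure f] by simp
qed

lemma hoeffding_components:
  fixes F :: "nat \<Rightarrow> real \<times> real \<times> real \<Rightarrow> real"
  assumes "n > 0" and F_meas: "\<And>i. F i \<in> borel_measurable coord_measure"
    and F_bound: "\<And>i p. \<bar>F i p\<bar> \<le> 1"
    and mean_nonneg: "0 \<le> (\<Sum>i<n. integral\<^sup>L coord_measure (F i))"
  shows "measure (sample_space n) {\<omega> \<in> space (sample_space n). (\<Sum>i<n. F i (\<omega> i)) \<le> 0}
     \<le> exp (- (\<Sum>i<n. integral\<^sup>L coord_measure (F i))\<^sup>2 / (2 * real n))"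
proof -
  interpret S: prob_space "sample_space n"
    by (rule prob_space_sample_space)
  define \<mu> where "\<mu> = (\<Sum>i<n. integral\<^sup>L coord_measure (F i))"
  interpret H: Hoeffding_ineq "sample_space n" "{..<n}" "\<lambda>i \<omega>. F i (\<omega> i)" "\<lambda>_. -1" "\<lambda>_. 1"
     "\<Sum>i<n. S.expectation (\<lambda>\<omega>. F i (\<omega> i))"
  proof unfold_locales
    show "S.indep_vars (\<lambda>_. borel) (\<lambda>i \<omega>. F i (\<omega> i)) {..<n}"
      by (rule S.indep_vars_compose2[OF indep_vars_components[OF \<open>n > 0\<close>]]) (use F_meas in auto)
    show "AE x in sample_space n. F i (x i) \<in> {-1..1}" for i
      using F_bound by (intro AE_I2) (auto simp: abs_le_iff)
  qed auto
  have "(\<Sum>i<n. S.expectation (\<lambda>\<omega>. F i (\<omega> i))) = \<mu>"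
    unfolding \<mu>_def by (intro sum.cong refl integral_component F_meas) auto
  then have "S.prob {\<omega> \<in> space (sample_space n). (\<Sum>i<n. F i (\<omega> i)) \<le> \<mu> - \<mu>}
     \<le> exp (-2 * \<mu>\<^sup>2 / (\<Sum>i<n. (1 - (-1))\<^sup>2))"
    using H.Hoeffding_ineq_le[of \<mu>] mean_nonneg \<open>n > 0\<close> by (simp add: \<mu>_def)
  then show ?thesis
    by (simp add: \<mu>_def)
qed

lemma prob_vote_sum_nonpos_le:
  assumes [measurable]: "Measurable.pred borel P"
    and "\<And>v. P v \<or> P (2 * \<beta> - v)" "\<And>v. \<bar>v - \<beta>\<bar> \<le> t \<Longrightarrow> P v" "0 \<le> t" "t \<le> 2"
  shows "measure (sample_space n)
      {\<omega> \<in> space (sample_space n). (\<Sum>i<n. vote P \<beta> (\<eta> i) (\<omega> i)) \<le> 0}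
    \<le> exp (- (real (card {i. i < n \<and> \<bar>\<eta> i\<bar> \<le> 1}) * std_normal_density 2 ^ 2 * t / 4)\<^sup>2
            / (2 * real n))"
proof (cases "n = 0")
  case True
  then show ?thesis
    using prob_space.prob_space[OF prob_space_sample_space] by simp
next
  case False
  let ?m = "real (card {i. i < n \<and> \<bar>\<eta> i\<bar> \<le> 1}) * std_normal_density 2 ^ 2 * t / 4"
  define \<mu> where "\<mu> = (\<Sum>i<n. integral\<^sup>L coord_measure (vote P \<beta> (\<eta> i)))"
  have "(if \<bar>e\<bar> \<le> 1 then std_normal_density 2 ^ 2 * t / 4 else 0)
      \<le> measure coord_measure (window e t)" for e
    using measure_window_ge[of e t] assms(4,5) by simp
  then have vote_mean: "(if \<bar>e\<bar> \<le> 1 then std_normal_density 2 ^ 2 * t / 4 else 0)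
      \<le> integral\<^sup>L coord_measure (vote P \<beta> e)" for e
    using integral_vote_ge_window[OF assms(1-4), of e] by (rule order_trans)
  have "?m = (\<Sum>i<n. if \<bar>\<eta> i\<bar> \<le> 1 then std_normal_density 2 ^ 2 * t / 4 else 0)"
    by (simp add: sum.If_cases lessThan_def Collect_conj_eq[symmetric])
  also have "\<dots> \<le> \<mu>"
    unfolding \<mu>_def by (intro sum_mono vote_mean)
  finally have \<mu>_ge: "?m \<le> \<mu>" .
  moreover have "0 \<le> ?m"
    using \<open>0 \<le> t\<close> by simp
  ultimately have "measure (sample_space n)
      {\<omega> \<in> space (sample_space n). (\<Sum>i<n. vote P \<beta> (\<eta> i) (\<omega> i)) \<le> 0}
    \<le> exp (- \<mu>\<^sup>2 / (2 * real n))"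
    unfolding \<mu>_def using False by (intro hoeffding_components) (auto simp: abs_vote_le \<mu>_def)
  also have "\<dots> \<le> exp (- ?m\<^sup>2 / (2 * real n))"
    using \<mu>_ge \<open>0 \<le> ?m\<close> by (auto intro!: divide_right_mono power_mono)
  finally show ?thesis .
qed

subsection \<open>Medians and the success event\<close>

lemma sorted_nth_iff_length_filter:
  fixes xs :: "'a::linorder list"
  assumes "sorted xs" "k < length xs" and down: "\<And>x y. x \<le> y \<Longrightarrow> P y \<Longrightarrow> P x"
  shows "P (xs ! k) \<longleftrightarrow> k < length (filter P xs)"
proof -
  let ?S = "{j. j < length xs \<and> P (xs ! j)}"
  have "P (xs ! k) \<longleftrightarrow> k < card ?S"
  proof
    assume "P (xs ! k)"
    then have "P (xs ! j)" if "j \<le> k" for j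
      using down sorted_nth_mono[OF \<open>sorted xs\<close> that \<open>k < length xs\<close>] by blast
    then have "{..k} \<subseteq> ?S"
      using \<open>k < length xs\<close> by auto
    then show "k < card ?S"
      using card_mono[of ?S "{..k}"] by simp
  next
    assume k_less: "k < card ?S"
    show "P (xs ! k)"
    proof (rule ccontr)
      assume not_P: "\<not> P (xs ! k)"
      have "j < k" if "j \<in> ?S" for j
      proof (rule ccontr)
        assume "\<not> j < k"
        then have "xs ! k \<le> xs ! j"
          using that sorted_nth_mono[OF \<open>sorted xs\<close>] by simp
        then show False
          using down that not_P by blast
      qed
      then have "card ?S \<le> card {..<k}"
        by (intro card_mono) auto
      then show False
        using k_less by simp
    qed
  qed
  then show ?thesis
    by (simp add: length_filter_conv_card)
qed

lemma kth_smallest_iff: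
  assumes "finite M" "1 \<le> k" "k \<le> card M" and down: "\<And>x y. x \<le> y \<Longrightarrow> P y \<Longrightarrow> P x"
  shows "P (kth_smallest k f M) \<longleftrightarrow> k \<le> card {i \<in> M. P (f i)}"
proof -
  let ?l = "sorted_list_of_set M"
  have "length (filter P (sort (map f ?l))) = length (filter (\<lambda>i. P (f i)) ?l)"
    by (simp add: filter_sort filter_map comp_def)
  also have "\<dots> = card (set (filter (\<lambda>i. P (f i)) ?l))"
    by (rule distinct_card[symmetric]) simp
  also have "set (filter (\<lambda>i. P (f i)) ?l) = {i \<in> M. P (f i)}"
    using assms(1) by auto
  finally have "length (filter P (sort (map f ?l))) = card {i \<in> M. P (f i)}" .
  moreover have "P (sort (map f ?l) ! (k - 1)) \<longleftrightarrow> k - 1 < length (filter P (sort (map f ?l)))"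
    using assms by (intro sorted_nth_iff_length_filter) auto
  ultimately show ?thesis
    using \<open>1 \<le> k\<close> unfolding kth_smallest_def by auto
qed

lemma nat_ceiling_half_le_iff: "nat \<lceil>real c / 2\<rceil> \<le> a \<longleftrightarrow> c \<le> 2 * a"
proof -
  have "nat \<lceil>real c / 2\<rceil> \<le> a \<longleftrightarrow> real c / 2 \<le> real a"
    by (simp add: nat_le_iff ceiling_le_iff)
  also have "\<dots> \<longleftrightarrow> c \<le> 2 * a"
    by linarith
  finally show ?thesis .
qed

lemma kth_smallest_half_iff:
  assumes "finite M" "M \<noteq> {}" and "\<And>x y. x \<le> y \<Longrightarrow> P y \<Longrightarrow> P x"
  shows "P (kth_smallest (nat \<lceil>real (card M) / 2\<rceil>) f M) \<longleftrightarrow> card M \<le> 2 * card {i \<in> M. P (f i)}"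
proof -
  have "1 \<le> card M"
    using assms by (simp add: Suc_le_eq card_gt_0_iff)
  then have "\<not> nat \<lceil>real (card M) / 2\<rceil> \<le> 0" and k_le: "nat \<lceil>real (card M) / 2\<rceil> \<le> card M"
    unfolding nat_ceiling_half_le_iff by simp_all
  then have k_ge: "1 \<le> nat \<lceil>real (card M) / 2\<rceil>"
    by linarith
  have "P (kth_smallest (nat \<lceil>real (card M) / 2\<rceil>) f M)
      \<longleftrightarrow> nat \<lceil>real (card M) / 2\<rceil> \<le> card {i \<in> M. P (f i)}"
    by (rule kth_smallest_iff[OF assms(1) k_ge k_le assms(3)])
  then show ?thesis
    by (simp only: nat_ceiling_half_le_iff)
qed

definition estimate :: "nat \<Rightarrow> real \<Rightarrow> (nat \<Rightarrow> real) \<Rightarrow> (nat \<Rightarrow> real \<times> real \<times> real) \<Rightarrow> real" where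
  "estimate n \<beta> \<eta> \<omega> = median_alg n (\<lambda>i. fst (\<omega> i) * \<beta> + \<eta> i) (\<lambda>i. fst (\<omega> i))
     (\<lambda>i. fst (snd (\<omega> i))) (\<lambda>i. snd (snd (\<omega> i)))"

lemma sum_vote_eq:
  assumes "finite I"
  shows "(\<Sum>i\<in>I. vote P \<beta> (e i) (p i))
    = 2 * real (card {i \<in> I. selected (p i) \<and> P (ratio \<beta> (e i) (p i))})
      - real (card {i \<in> I. selected (p i)})"
proof -
  have card_eq: "real (card {i \<in> I. Q i}) = (\<Sum>i\<in>I. if Q i then 1 else 0)" for Q
    using sum.inter_filter[OF assms, of "\<lambda>_. 1 :: real" Q] by simp
  have "(\<Sum>i\<in>I. vote P \<beta> (e i) (p i)) = (\<Sum>i\<in>I.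
      2 * (if selected (p i) \<and> P (ratio \<beta> (e i) (p i)) then 1 else 0) - (if selected (p i) then 1 else 0))"
    by (intro sum.cong) (auto simp: vote_def)
  then show ?thesis
    by (simp add: card_eq sum_subtractf sum_distrib_left)
qed

lemma estimate_close_iff:
  assumes "0 \<le> t"
  shows "(\<beta> - estimate n \<beta> \<eta> \<omega>)\<^sup>2 \<le> t\<^sup>2 \<longleftrightarrow>
    (if \<forall>i<n. \<not> selected (\<omega> i) then \<beta>\<^sup>2 \<le> t\<^sup>2
     else 0 \<le> (\<Sum>i<n. vote (\<lambda>v. v \<le> \<beta> + t) \<beta> (\<eta> i) (\<omega> i))
       \<and> 0 < (\<Sum>i<n. vote (\<lambda>v. \<beta> - t \<le> v) \<beta> (\<eta> i) (\<omega> i)))"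
proof -
  define M where "M = {i. i < n \<and> selected (\<omega> i)}"
  define r where "r = (\<lambda>i. ratio \<beta> (\<eta> i) (\<omega> i))"
  define med where "med = kth_smallest (nat \<lceil>real (card M) / 2\<rceil>) r M"
  have M_empty_iff: "M = {} \<longleftrightarrow> (\<forall>i<n. \<not> selected (\<omega> i))"
    by (auto simp: M_def)
  have estimate_eq: "estimate n \<beta> \<eta> \<omega> = (if M = {} then 0 else med)"
    by (auto simp: estimate_def median_alg_def Let_def M_def med_def r_def selected_def ratio_def)
  have vote_ge_eq: "vote (\<lambda>v. \<beta> - t \<le> v) \<beta> e q = - vote (\<lambda>v. v < \<beta> - t) \<beta> e q" for e q
    using vote_not[of "\<lambda>v. v < \<beta> - t"] by (simp add: not_less)
  have votes:
    "(\<Sum>i<n. vote (\<lambda>v. v \<le> \<beta> + t) \<beta> (\<eta> i) (\<omega> i)) = 2 * real (card {i \<in> M. r i \<le> \<beta> + t}) - real (card M)"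
    "(\<Sum>i<n. vote (\<lambda>v. \<beta> - t \<le> v) \<beta> (\<eta> i) (\<omega> i)) = real (card M) - 2 * real (card {i \<in> M. r i < \<beta> - t})"
    using sum_vote_eq[of "{..<n}" "\<lambda>v. v \<le> \<beta> + t" \<beta> \<eta> \<omega>] sum_vote_eq[of "{..<n}" "\<lambda>v. v < \<beta> - t" \<beta> \<eta> \<omega>]
    by (simp_all add: M_def r_def vote_ge_eq sum_negf conj_assoc)
  have close_iff: "(\<beta> - x)\<^sup>2 \<le> t\<^sup>2 \<longleftrightarrow> x \<le> \<beta> + t \<and> \<not> x < \<beta> - t" for x
    using assms abs_le_square_iff[of "\<beta> - x" t] by auto
  show ?thesis
  proof (cases "M = {}")
    case True
    then show ?thesis
      using M_empty_iff by (simp add: estimate_eq)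
  next
    case False
    have "finite M"
      by (simp add: M_def)
    have "med \<le> \<beta> + t \<longleftrightarrow> card M \<le> 2 * card {i \<in> M. r i \<le> \<beta> + t}"
      unfolding med_def by (rule kth_smallest_half_iff[OF \<open>finite M\<close> False]) auto
    moreover have "med < \<beta> - t \<longleftrightarrow> card M \<le> 2 * card {i \<in> M. r i < \<beta> - t}"
      unfolding med_def by (rule kth_smallest_half_iff[OF \<open>finite M\<close> False]) auto
    ultimately have "(\<beta> - estimate n \<beta> \<eta> \<omega>)\<^sup>2 \<le> t\<^sup>2 \<longleftrightarrow>
        0 \<le> 2 * real (card {i \<in> M. r i \<le> \<beta> + t}) - real (card M)
        \<and> 0 < real (card M) - 2 * real (card {i \<in> M. r i < \<beta> - t})"
      using False unfolding estimate_eq if_not_P[OF False] close_iff by linarith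
    then show ?thesis
      using False M_empty_iff by (simp only: votes if_False)
  qed
qed

lemma prob_estimate_close_ge:
  assumes "0 \<le> t" "t \<le> 2"
  shows "1 - 2 * exp (- (real (card {i. i < n \<and> \<bar>\<eta> i\<bar> \<le> 1}) * std_normal_density 2 ^ 2 * t / 4)\<^sup>2
            / (2 * real n))
    \<le> measure (sample_space n) {\<omega> \<in> space (sample_space n). (\<beta> - estimate n \<beta> \<eta> \<omega>)\<^sup>2 \<le> t\<^sup>2}"
proof -
  interpret S: prob_space "sample_space n"
    by (rule prob_space_sample_space)
  let ?bound = "exp (- (real (card {i. i < n \<and> \<bar>\<eta> i\<bar> \<le> 1}) * std_normal_density 2 ^ 2 * t / 4)\<^sup>2
            / (2 * real n))"
  define V where "V P \<omega> = (\<Sum>i<n. vote P \<beta> (\<eta> i) (\<omega> i))" for P \<omega>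
  define E where "E = {\<omega> \<in> space (sample_space n). (\<beta> - estimate n \<beta> \<eta> \<omega>)\<^sup>2 \<le> t\<^sup>2}"
  define U where "U = {\<omega> \<in> space (sample_space n). V (\<lambda>v. v \<le> \<beta> + t) \<omega> \<le> 0}"
  define L where "L = {\<omega> \<in> space (sample_space n). V (\<lambda>v. \<beta> - t \<le> v) \<omega> \<le> 0}"
  have E_eq: "E = {\<omega> \<in> space (sample_space n). if \<forall>i<n. \<not> selected (\<omega> i) then \<beta>\<^sup>2 \<le> t\<^sup>2
      else 0 \<le> V (\<lambda>v. v \<le> \<beta> + t) \<omega> \<and> 0 < V (\<lambda>v. \<beta> - t \<le> v) \<omega>}"
    unfolding E_def V_def using assms by (simp add: estimate_close_iff)
  have [measurable]: "E \<in> sets (sample_space n)" "U \<in> sets (sample_space n)" "L \<in> sets (sample_space n)"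
    unfolding E_eq U_def L_def V_def sample_space_def by measurable
  have "V P \<omega> = 0" if "\<forall>i<n. \<not> selected (\<omega> i)" for P \<omega>
    using that by (simp add: V_def vote_def)
  then have "space (sample_space n) - E \<subseteq> U \<union> L"
    by (auto simp: E_eq U_def L_def)
  then have "S.prob (space (sample_space n) - E) \<le> S.prob U + S.prob L"
    using S.finite_measure_mono[of "space (sample_space n) - E" "U \<union> L"]
      measure_subadditive[of U "sample_space n" L] by (simp add: S.emeasure_eq_measure)
  moreover have "S.prob U \<le> ?bound"
    unfolding U_def V_def using assms by (intro prob_vote_sum_nonpos_le) auto
  moreover have "S.prob L \<le> ?bound"
    unfolding L_def V_def using assms by (intro prob_vote_sum_nonpos_le) auto
  moreover have "S.prob (space (sample_space n) - E) = 1 - S.prob E"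
    by (rule S.prob_compl) measurable
  ultimately have "1 - 2 * ?bound \<le> S.prob E"
    by linarith
  then show ?thesis
    by (simp only: E_def)
qed

lemma prob_estimate_concentration:
  assumes \<alpha>: "0 < \<alpha>" "\<alpha> * real n \<le> real (card {i. i < n \<and> \<bar>\<eta> i\<bar> \<le> 1})"
    and \<tau>: "0 < \<tau>" "\<tau> \<le> \<alpha>\<^sup>2 * real n"
  shows "1 - 2 * exp (- (std_normal_density 2 ^ 4 / 32) * \<tau>)
    \<le> measure (sample_space n)
        {\<omega> \<in> space (sample_space n). (\<beta> - estimate n \<beta> \<eta> \<omega>)\<^sup>2 \<le> \<tau> / (\<alpha>\<^sup>2 * real n)}"
proof -
  let ?m = "real (card {i. i < n \<and> \<bar>\<eta> i\<bar> \<le> 1})"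
  have "0 < \<tau> / (\<alpha>\<^sup>2 * real n)" "\<tau> / (\<alpha>\<^sup>2 * real n) \<le> 1" "n > 0"
    using \<alpha> \<tau> by (auto intro: Nat.gr0I)
  define t where "t = sqrt (\<tau> / (\<alpha>\<^sup>2 * real n))"
  have t: "0 \<le> t" "t \<le> 1" and t_sq: "t\<^sup>2 = \<tau> / (\<alpha>\<^sup>2 * real n)"
    using \<open>0 < \<tau> / (\<alpha>\<^sup>2 * real n)\<close> \<open>\<tau> / (\<alpha>\<^sup>2 * real n) \<le> 1\<close> by (auto simp: t_def)
  have "\<tau> = \<alpha>\<^sup>2 * real n * t\<^sup>2"
    using t_sq \<alpha> \<open>n > 0\<close> by (simp add: field_simps)
  then have "std_normal_density 2 ^ 4 / 32 * \<tau> = (\<alpha> * real n * std_normal_density 2 ^ 2 * t / 4)\<^sup>2 / (2 * real n)"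
    using \<open>n > 0\<close> by (simp add: power_mult_distrib field_simps eval_nat_numeral)
  also have "\<dots> \<le> (?m * std_normal_density 2 ^ 2 * t / 4)\<^sup>2 / (2 * real n)"
    using \<alpha> t by (intro divide_right_mono power_mono mult_right_mono) auto
  finally have "1 - 2 * exp (- (std_normal_density 2 ^ 4 / 32) * \<tau>)
      \<le> 1 - 2 * exp (- (?m * std_normal_density 2 ^ 2 * t / 4)\<^sup>2 / (2 * real n))"
    by simp
  also have "\<dots> \<le> measure (sample_space n)
      {\<omega> \<in> space (sample_space n). (\<beta> - estimate n \<beta> \<eta> \<omega>)\<^sup>2 \<le> t\<^sup>2}"
    using t by (intro prob_estimate_close_ge) auto
  finally show ?thesis
    by (simp only: t_sq)
qed

theorem mainTheorem13:
  "\<exists>c::real. c > 0 \<and>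
    (\<forall>(n::nat) (\<beta>::real) (\<eta>::nat \<Rightarrow> real) (\<alpha>::real) (\<tau>::real).
      0 < \<alpha> \<and> \<alpha> \<le> 1 \<and> real (card {i. i < n \<and> \<bar>\<eta> i\<bar> \<le> 1}) \<ge> \<alpha> * real n \<and>
      0 < \<tau> \<and> \<tau> \<le> \<alpha>\<^sup>2 * real n \<longrightarrow>
      measure (sample_space n)
        {\<omega> \<in> space (sample_space n).
           (let X = (\<lambda>i. fst (\<omega> i));
                w = (\<lambda>i. fst (snd (\<omega> i)));
                \<sigma> = (\<lambda>i. snd (snd (\<omega> i)));
                y = (\<lambda>i. X i * \<beta> + \<eta> i)
            in (\<beta> - median_alg n y X w \<sigma>)\<^sup>2 \<le> \<tau> / (\<alpha>\<^sup>2 * real n))}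
      \<ge> 1 - 2 * exp (- c * \<tau>))"
proof (intro exI[of _ "std_normal_density 2 ^ 4 / 32"] conjI allI impI)
  show "std_normal_density 2 ^ 4 / 32 > 0"
    using normal_density_pos[of 1 0 2] by simp
qed (unfold Let_def, rule prob_estimate_concentration[unfolded estimate_def]; simp)

end
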